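(* For every INF sentence $\varphi$ over a vocabulary $\Sigma$, the INF propagator $O_\varphi$ is a monotone propagator for the theory $\{\varphi\}$.
   Context: Vocabularies are finite sets of predicate symbols (equality is interpreted as identity). Truth values $\mathbf{t},\mathbf{f},\mathbf{u},\mathbf{i}$; inverse: $\mathbf{t}^{-1}=\mathbf{f}$, $\mathbf{f}^{-1}=\mathbf{t}$, $\mathbf{u}^{-1}=\mathbf{u}$, $\mathbf{i}^{-1}=\mathbf{i}$. Truth order $\le_t$: $\mathbf{f}\le_t\mathbf{u}\le_t\mathbf{t}$, $\mathbf{f}\le_t\mathbf{i}\le_t\mathbf{t}$ ($\mathbf{u},\mathbf{i}$ incomparable). Precision order $\le_p$: $\mathbf{u}\le_p\mathbf{t}\le_p\mathbf{i}$, $\mathbf{u}\le_p\mathbf{f}\le_p\mathbf{i}$ ($\mathbf{t},\mathbf{f}$ incomparable). A four-valued $\Sigma$-structure $\tilde I$ has domain $D$ and assigns each $P/n\in\Sigma$ a function $P^{\tilde I}:D^n\to\{\mathbf{t},\mathbf{f},\mathbf{u},\mathbf{i}\}$; two-valued structures (only $\mathbf{t},\mathbf{f}$) are identified with ordinary structures. $\tilde I\le_p\tilde J$ iff pointwise $\le_p$. The value $\tilde I\theta(\varphi)$ of a formula under variable assignment $\theta$: $\tilde I\theta(P(\overline{x}))=P^{\tilde I}(\theta(\overline{x}))$; $\tilde I\theta(\neg\varphi)=(\tilde I\theta(\varphi))^{-1}$; $\wedge$ and $\forall$ give the $\le_t$-greatest lower bound, $\vee$ and $\exists$ the $\le_t$-least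 upper bound of the values of the components (over all $d\in D$ for quantifiers). An INF sentence is a sentence $\forall\overline{x}\,(\psi\supset L[\overline{x}])$ with $\psi$ a formula whose free variables are among $\overline{x}$ and $L$ a literal $P(\overline{x})$ or $\neg P(\overline{x})$ with free variables $\overline{x}$. The INF propagator $O_\varphi$ for $\varphi=\forall\overline{x}(\psi\supset P(\overline{x}))$: $O_\varphi(\tilde I)$ agrees with $\tilde I$ except that for each tuple $\overline{d}$ with $\tilde I[\overline{x}/\overline{d}](\psi)\ge_p\mathbf{t}$, $P^{O_\varphi(\tilde I)}(\overline{d})=\mathrm{lub}_{\le_p}\{\mathbf{t},P^{\tilde I}(\overline{d})\}$; for $\varphi=\forall\overline{x}(\psi\supset\neg P(\overline{x}))$ the same with $\mathbf{f}$ in place of $\mathbf{t}$ in the lub. A propagator for $T$ is a map $O$ on four-valued $\Sigma$-structures with (i) $\tilde I\le_p O(\tilde I)$ and (ii) $O(\tilde I)\le_p M$ for every two-valued model $M$ of $T$ with $\tilde I\le_p M$; monotone means $\tilde I\le_p\tilde J\Rightarrow O(\tilde I)\le_p O(\tilde J)$. *)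

theory Defs
  imports Main
begin

datatype tv = Tt | Ff | Uu | Ii

fun tinv :: "tv \<Rightarrow> tv" where
  "tinv Tt = Ff" | "tinv Ff = Tt" | "tinv Uu = Uu" | "tinv Ii = Ii"

definition leq_t :: "tv \<Rightarrow> tv \<Rightarrow> bool" where
  "leq_t a b \<longleftrightarrow> a = b \<or> a = Ff \<or> b = Tt"

definition leq_p :: "tv \<Rightarrow> tv \<Rightarrow> bool" where
  "leq_p a b \<longleftrightarrow> a = b \<or> a = Uu \<or> b = Ii"

text \<open>Greatest lower bound / least upper bound w.r.t. the truth order of a set of
  truth values (the truth order is a finite lattice).\<close>
definition glb_t :: "tv set \<Rightarrow> tv" where
  "glb_t S = (THE g. (\<forall>s\<in>S. leq_t g s) \<and> (\<forall>h. (\<forall>s\<in>S. leq_t h s) \<longrightarrow> leq_t h g))"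

definition lub_t :: "tv set \<Rightarrow> tv" where
  "lub_t S = (THE g. (\<forall>s\<in>S. leq_t s g) \<and> (\<forall>h. (\<forall>s\<in>S. leq_t s h) \<longrightarrow> leq_t g h))"

definition lub_p :: "tv set \<Rightarrow> tv" where
  "lub_p S = (THE g. (\<forall>s\<in>S. leq_p s g) \<and> (\<forall>h. (\<forall>s\<in>S. leq_p s h) \<longrightarrow> leq_p g h))"

datatype ('p, 'v) fm =
    Atom 'p "'v list"
  | Eq 'v 'v
  | Neg "('p, 'v) fm"
  | Conj "('p, 'v) fm" "('p, 'v) fm"
  | Disj "('p, 'v) fm" "('p, 'v) fm"
  | All 'v "('p, 'v) fm"
  | Ex 'v "('p, 'v) fm"

fun fv :: "('p, 'v) fm \<Rightarrow> 'v set" where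
  "fv (Atom P xs) = set xs"
| "fv (Eq x y) = {x, y}"
| "fv (Neg f) = fv f"
| "fv (Conj f g) = fv f \<union> fv g"
| "fv (Disj f g) = fv f \<union> fv g"
| "fv (All x f) = fv f - {x}"
| "fv (Ex x f) = fv f - {x}"

fun wf_fm :: "'p set \<Rightarrow> ('p \<Rightarrow> nat) \<Rightarrow> ('p, 'v) fm \<Rightarrow> bool" where
  "wf_fm Sig ar (Atom P xs) \<longleftrightarrow> P \<in> Sig \<and> length xs = ar P"
| "wf_fm Sig ar (Eq x y) \<longleftrightarrow> True"
| "wf_fm Sig ar (Neg f) \<longleftrightarrow> wf_fm Sig ar f"
| "wf_fm Sig ar (Conj f g) \<longleftrightarrow> wf_fm Sig ar f \<and> wf_fm Sig ar g"
| "wf_fm Sig ar (Disj f g) \<longleftrightarrow> wf_fm Sig ar f \<and> wf_fm Sig ar g"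
| "wf_fm Sig ar (All x f) \<longleftrightarrow> wf_fm Sig ar f"
| "wf_fm Sig ar (Ex x f) \<longleftrightarrow> wf_fm Sig ar f"

definition Imp :: "('p, 'v) fm \<Rightarrow> ('p, 'v) fm \<Rightarrow> ('p, 'v) fm" where
  "Imp f g = Disj (Neg f) g"

definition Alls :: "'v list \<Rightarrow> ('p, 'v) fm \<Rightarrow> ('p, 'v) fm" where
  "Alls xs f = foldr All xs f"

text \<open>A four-valued structure with domain the type \<open>'d\<close> interprets each predicate
  symbol P as a function from tuples (lists of length \<open>ar P\<close>) to truth values;
  values on symbols outside the vocabulary or on tuples of the wrong length are
  irrelevant.\<close>
type_synonym ('p, 'd) struct4 = "'p \<Rightarrow> 'd list \<Rightarrow> tv"

fun eval :: "('p, 'd) struct4 \<Rightarrow> ('v \<Rightarrow> 'd) \<Rightarrow> ('p, 'v) fm \<Rightarrow> tv" where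
  "eval I \<theta> (Atom P xs) = I P (map \<theta> xs)"
| "eval I \<theta> (Eq x y) = (if \<theta> x = \<theta> y then Tt else Ff)"
| "eval I \<theta> (Neg f) = tinv (eval I \<theta> f)"
| "eval I \<theta> (Conj f g) = glb_t {eval I \<theta> f, eval I \<theta> g}"
| "eval I \<theta> (Disj f g) = lub_t {eval I \<theta> f, eval I \<theta> g}"
| "eval I \<theta> (All x f) = glb_t {eval I (\<theta>(x := d)) f | d. True}"
| "eval I \<theta> (Ex x f) = lub_t {eval I (\<theta>(x := d)) f | d. True}"

definition struct_le_p :: "'p set \<Rightarrow> ('p \<Rightarrow> nat) \<Rightarrow> ('p, 'd) struct4 \<Rightarrow> ('p, 'd) struct4 \<Rightarrow> bool" where
  "struct_le_p Sig ar I J \<longleftrightarrow>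
     (\<forall>P\<in>Sig. \<forall>ds. length ds = ar P \<longrightarrow> leq_p (I P ds) (J P ds))"

definition two_valued :: "'p set \<Rightarrow> ('p \<Rightarrow> nat) \<Rightarrow> ('p, 'd) struct4 \<Rightarrow> bool" where
  "two_valued Sig ar M \<longleftrightarrow> (\<forall>P\<in>Sig. \<forall>ds. length ds = ar P \<longrightarrow> M P ds \<in> {Tt, Ff})"

definition is_model :: "'p set \<Rightarrow> ('p \<Rightarrow> nat) \<Rightarrow> ('p, 'v) fm set \<Rightarrow> ('p, 'd) struct4 \<Rightarrow> bool" where
  "is_model Sig ar T M \<longleftrightarrow> two_valued Sig ar M \<and> (\<forall>\<phi>\<in>T. \<forall>\<theta>. eval M \<theta> \<phi> = Tt)"

definition is_propagator ::
  "'p set \<Rightarrow> ('p \<Rightarrow> nat) \<Rightarrow> ('p, 'v) fm set \<Rightarrow> (('p, 'd) struct4 \<Rightarrow> ('p, 'd) struct4) \<Rightarrow> bool" where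
  "is_propagator Sig ar T Op \<longleftrightarrow>
     (\<forall>I. struct_le_p Sig ar I (Op I)) \<and>
     (\<forall>I M. is_model Sig ar T M \<and> struct_le_p Sig ar I M \<longrightarrow> struct_le_p Sig ar (Op I) M)"

definition monotone_op ::
  "'p set \<Rightarrow> ('p \<Rightarrow> nat) \<Rightarrow> (('p, 'd) struct4 \<Rightarrow> ('p, 'd) struct4) \<Rightarrow> bool" where
  "monotone_op Sig ar Op \<longleftrightarrow>
     (\<forall>I J. struct_le_p Sig ar I J \<longrightarrow> struct_le_p Sig ar (Op I) (Op J))"

text \<open>An INF sentence \<open>\<forall>xs (\<psi> \<supset> L[xs])\<close> is given by the distinct variable tuple \<open>xs\<close>,
  the body \<open>\<psi>\<close>, the predicate symbol \<open>P\<close> and the sign of the literal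
  (\<open>pos = True\<close>: \<open>L = P(xs)\<close>; \<open>pos = False\<close>: \<open>L = \<not>P(xs)\<close>).\<close>
definition lit :: "bool \<Rightarrow> 'p \<Rightarrow> 'v list \<Rightarrow> ('p, 'v) fm" where
  "lit pos P xs = (if pos then Atom P xs else Neg (Atom P xs))"

definition inf_sentence :: "'v list \<Rightarrow> ('p, 'v) fm \<Rightarrow> bool \<Rightarrow> 'p \<Rightarrow> ('p, 'v) fm" where
  "inf_sentence xs \<psi> pos P = Alls xs (Imp \<psi> (lit pos P xs))"

definition is_inf :: "'p set \<Rightarrow> ('p \<Rightarrow> nat) \<Rightarrow> 'v list \<Rightarrow> ('p, 'v) fm \<Rightarrow> bool \<Rightarrow> 'p \<Rightarrow> bool" where
  "is_inf Sig ar xs \<psi> pos P \<longleftrightarrow>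
     distinct xs \<and> P \<in> Sig \<and> ar P = length xs \<and> wf_fm Sig ar \<psi> \<and> fv \<psi> \<subseteq> set xs"

text \<open>The assignment \<open>[xs/ds]\<close> (variables outside xs get an arbitrary value;
  irrelevant since \<open>fv \<psi> \<subseteq> set xs\<close>).\<close>
definition assign :: "'v list \<Rightarrow> 'd list \<Rightarrow> 'v \<Rightarrow> 'd" where
  "assign xs ds v = (case map_of (zip xs ds) v of Some d \<Rightarrow> d | None \<Rightarrow> undefined)"

definition inf_prop ::
  "'v list \<Rightarrow> ('p, 'v) fm \<Rightarrow> bool \<Rightarrow> 'p \<Rightarrow> ('p, 'd) struct4 \<Rightarrow> ('p, 'd) struct4" where
  "inf_prop xs \<psi> pos P I = (\<lambda>Q ds.
     if Q = P \<and> length ds = length xs \<and> leq_p Tt (eval I (assign xs ds) \<psi>)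
     then lub_p {if pos then Tt else Ff, I P ds}
     else I Q ds)"

end

theory Submission
  imports Defs
begin

text \<open>Evaluation is monotone in the precision order because negation and the truth-order
  meets and joins are, the latter in the Egli-Milner sense. Hence if \<open>\<psi>\<close> is at least
  true in \<open>I\<close>, it is true in every two-valued \<open>M \<ge>\<^sub>p I\<close>; if \<open>M\<close> is moreover a model of
  \<open>\<forall>xs (\<psi> \<supset> L)\<close>, then \<open>M\<close> makes \<open>L\<close> true, so the value \<open>O\<^sub>\<phi>\<close> assigns lies below \<open>M\<close>.
  Monotonicity of \<open>O\<^sub>\<phi>\<close> follows from that of evaluation and of \<open>lub\<^sub>p\<close>.\<close>

lemma all_tv: "(\<forall>h. Q h) \<longleftrightarrow> Q Tt \<and> Q Ff \<and> Q Uu \<and> Q Ii"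
  by (metis tv.exhaust)

lemma ball_tv:
  "(\<forall>s\<in>S. Q s) \<longleftrightarrow>
     (Tt \<in> S \<longrightarrow> Q Tt) \<and> (Ff \<in> S \<longrightarrow> Q Ff) \<and> (Uu \<in> S \<longrightarrow> Q Uu) \<and> (Ii \<in> S \<longrightarrow> Q Ii)"
  using all_tv[of "\<lambda>s. s \<in> S \<longrightarrow> Q s"] by blast

lemma bex_tv:
  "(\<exists>s\<in>S. Q s) \<longleftrightarrow>
     (Tt \<in> S \<and> Q Tt) \<or> (Ff \<in> S \<and> Q Ff) \<or> (Uu \<in> S \<and> Q Uu) \<or> (Ii \<in> S \<and> Q Ii)"
  using all_tv[of "\<lambda>s. \<not> (s \<in> S \<and> Q s)"] by blast

lemma leq_t_antisym: "leq_t a b \<Longrightarrow> leq_t b a \<Longrightarrow> a = b"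
  unfolding leq_t_def by (cases a; cases b) auto

lemma leq_p_refl: "leq_p a a"
  unfolding leq_p_def by simp

lemma leq_p_trans: "leq_p a b \<Longrightarrow> leq_p b c \<Longrightarrow> leq_p a c"
  unfolding leq_p_def by (cases a; cases b; cases c) auto

lemma leq_p_antisym: "leq_p a b \<Longrightarrow> leq_p b a \<Longrightarrow> a = b"
  unfolding leq_p_def by (cases a; cases b) auto

lemma tinv_mono_p: "leq_p a b \<Longrightarrow> leq_p (tinv a) (tinv b)"
  unfolding leq_p_def by (cases a; cases b) auto

lemma glb_t_eq:
  "glb_t S = (if Ff \<in> S \<or> Uu \<in> S \<and> Ii \<in> S then Ff else if Uu \<in> S then Uu
              else if Ii \<in> S then Ii else Tt)" (is "_ = ?g")
proof -
  have spec: "(\<forall>s\<in>S. leq_t ?g s) \<and> (\<forall>h. (\<forall>s\<in>S. leq_t h s) \<longrightarrow> leq_t h ?g)"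
    unfolding ball_tv all_tv
    by (cases "Tt \<in> S"; cases "Ff \<in> S"; cases "Uu \<in> S"; cases "Ii \<in> S"; simp add: leq_t_def)
  show ?thesis
    unfolding glb_t_def by (rule the_equality) (use spec leq_t_antisym in blast)+
qed

lemma lub_t_eq:
  "lub_t S = (if Tt \<in> S \<or> Uu \<in> S \<and> Ii \<in> S then Tt else if Uu \<in> S then Uu
              else if Ii \<in> S then Ii else Ff)" (is "_ = ?l")
proof -
  have spec: "(\<forall>s\<in>S. leq_t s ?l) \<and> (\<forall>h. (\<forall>s\<in>S. leq_t s h) \<longrightarrow> leq_t ?l h)"
    unfolding ball_tv all_tv
    by (cases "Tt \<in> S"; cases "Ff \<in> S"; cases "Uu \<in> S"; cases "Ii \<in> S"; simp add: leq_t_def)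
  show ?thesis
    unfolding lub_t_def by (rule the_equality) (use spec leq_t_antisym in blast)+
qed

lemma lub_p_eq:
  "lub_p S = (if Ii \<in> S \<or> Tt \<in> S \<and> Ff \<in> S then Ii else if Tt \<in> S then Tt
              else if Ff \<in> S then Ff else Uu)" (is "_ = ?l")
proof -
  have spec: "(\<forall>s\<in>S. leq_p s ?l) \<and> (\<forall>h. (\<forall>s\<in>S. leq_p s h) \<longrightarrow> leq_p ?l h)"
    unfolding ball_tv all_tv
    by (cases "Tt \<in> S"; cases "Ff \<in> S"; cases "Uu \<in> S"; cases "Ii \<in> S"; simp add: leq_p_def)
  show ?thesis
    unfolding lub_p_def by (rule the_equality) (use spec leq_p_antisym in blast)+
qed

lemma glb_t_two_valued: "S \<subseteq> {Tt, Ff} \<Longrightarrow> glb_t S \<in> {Tt, Ff}"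
  unfolding glb_t_eq by auto

lemma lub_t_two_valued: "S \<subseteq> {Tt, Ff} \<Longrightarrow> lub_t S \<in> {Tt, Ff}"
  unfolding lub_t_eq by auto

lemma glb_t_eq_TtD: "glb_t S = Tt \<Longrightarrow> s \<in> S \<Longrightarrow> s = Tt"
  by (cases s) (auto simp: glb_t_eq split: if_splits)

lemma lub_t_Ff_eq_TtD: "lub_t {Ff, a} = Tt \<Longrightarrow> a = Tt"
  by (cases a) (auto simp: lub_t_eq)

lemma lub_p_upper: "s \<in> S \<Longrightarrow> leq_p s (lub_p S)"
  by (cases s) (auto simp: lub_p_eq leq_p_def)

definition egli_milner :: "tv set \<Rightarrow> tv set \<Rightarrow> bool" where
  "egli_milner S T \<longleftrightarrow> (\<forall>s\<in>S. \<exists>t\<in>T. leq_p s t) \<and> (\<forall>t\<in>T. \<exists>s\<in>S. leq_p s t)"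

lemma egli_milner_pair:
  "leq_p a a' \<Longrightarrow> leq_p b b' \<Longrightarrow> egli_milner {a, b} {a', b'}"
  unfolding egli_milner_def by auto

lemma egli_milner_image:
  "(\<And>d. leq_p (f d) (g d)) \<Longrightarrow> egli_milner {f d | d. True} {g d | d. True}"
  unfolding egli_milner_def by auto

lemma glb_t_mono_p: "egli_milner S T \<Longrightarrow> leq_p (glb_t S) (glb_t T)"
  unfolding egli_milner_def ball_tv bex_tv glb_t_eq
  by (cases "Tt \<in> S"; cases "Ff \<in> S"; cases "Uu \<in> S"; cases "Ii \<in> S";
      cases "Tt \<in> T"; cases "Ff \<in> T"; cases "Uu \<in> T"; cases "Ii \<in> T"; simp add: leq_p_def)

lemma lub_t_mono_p: "egli_milner S T \<Longrightarrow> leq_p (lub_t S) (lub_t T)"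
  unfolding egli_milner_def ball_tv bex_tv lub_t_eq
  by (cases "Tt \<in> S"; cases "Ff \<in> S"; cases "Uu \<in> S"; cases "Ii \<in> S";
      cases "Tt \<in> T"; cases "Ff \<in> T"; cases "Uu \<in> T"; cases "Ii \<in> T"; simp add: leq_p_def)

lemma lub_p_mono: "egli_milner S T \<Longrightarrow> leq_p (lub_p S) (lub_p T)"
  unfolding egli_milner_def ball_tv bex_tv lub_p_eq
  by (cases "Tt \<in> S"; cases "Ff \<in> S"; cases "Uu \<in> S"; cases "Ii \<in> S";
      cases "Tt \<in> T"; cases "Ff \<in> T"; cases "Uu \<in> T"; cases "Ii \<in> T"; simp add: leq_p_def)

lemma eval_mono_p:
  assumes "struct_le_p Sig ar I J" and "wf_fm Sig ar f"
  shows "leq_p (eval I \<theta> f) (eval J \<theta> f)"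
  using assms(2)
proof (induction f arbitrary: \<theta>)
  case (Atom Q ys)
  then show ?case using assms(1) unfolding struct_le_p_def by simp
next
  case (All x f)
  then have "egli_milner {eval I (\<theta>(x := d)) f | d. True} {eval J (\<theta>(x := d)) f | d. True}"
    by (intro egli_milner_image) simp
  then show ?case by (simp add: glb_t_mono_p)
next
  case (Ex x f)
  then have "egli_milner {eval I (\<theta>(x := d)) f | d. True} {eval J (\<theta>(x := d)) f | d. True}"
    by (intro egli_milner_image) simp
  then show ?case by (simp add: lub_t_mono_p)
qed (auto simp: leq_p_refl tinv_mono_p egli_milner_pair intro!: glb_t_mono_p lub_t_mono_p)

lemma eval_two_valued:
  assumes "two_valued Sig ar M" and "wf_fm Sig ar f"
  shows "eval M \<theta> f \<in> {Tt, Ff}"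
  using assms(2)
proof (induction f arbitrary: \<theta>)
  case (Atom Q ys)
  then show ?case using assms(1) unfolding two_valued_def by simp
next
  case (Neg f)
  then have "eval M \<theta> f \<in> {Tt, Ff}" by simp
  then show ?case by auto
next
  case (Conj f g)
  then show ?case unfolding eval.simps by (intro glb_t_two_valued) auto
next
  case (Disj f g)
  then show ?case unfolding eval.simps by (intro lub_t_two_valued) auto
next
  case (All x f)
  then show ?case unfolding eval.simps by (intro glb_t_two_valued) auto
next
  case (Ex x f)
  then show ?case unfolding eval.simps by (intro lub_t_two_valued) auto
qed simp

lemma eval_cong: "(\<And>v. v \<in> fv f \<Longrightarrow> \<sigma> v = \<sigma>' v) \<Longrightarrow> eval I \<sigma> f = eval I \<sigma>' f"
proof (induction f arbitrary: \<sigma> \<sigma>')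
  case (Atom Q ys)
  then have "map \<sigma> ys = map \<sigma>' ys" by (intro map_cong) auto
  then show ?case by (simp only: eval.simps)
next
  case (Neg f)
  have "eval I \<sigma> f = eval I \<sigma>' f" by (rule Neg.IH) (use Neg.prems in simp)
  then show ?case by simp
next
  case (Conj f g)
  have "eval I \<sigma> f = eval I \<sigma>' f" by (rule Conj.IH(1)) (use Conj.prems in simp)
  moreover have "eval I \<sigma> g = eval I \<sigma>' g" by (rule Conj.IH(2)) (use Conj.prems in simp)
  ultimately show ?case by simp
next
  case (Disj f g)
  have "eval I \<sigma> f = eval I \<sigma>' f" by (rule Disj.IH(1)) (use Disj.prems in simp)
  moreover have "eval I \<sigma> g = eval I \<sigma>' g" by (rule Disj.IH(2)) (use Disj.prems in simp)
  ultimately show ?case by simp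
next
  case (All x f)
  have "eval I (\<sigma>(x := d)) f = eval I (\<sigma>'(x := d)) f" for d
    by (rule All.IH) (use All.prems in auto)
  then show ?case by simp
next
  case (Ex x f)
  have "eval I (\<sigma>(x := d)) f = eval I (\<sigma>'(x := d)) f" for d
    by (rule Ex.IH) (use Ex.prems in auto)
  then show ?case by simp
qed simp

lemma eval_Alls_TtD:
  "eval I \<theta> (Alls xs f) = Tt \<Longrightarrow> (\<And>v. v \<notin> set xs \<Longrightarrow> \<sigma> v = \<theta> v) \<Longrightarrow> eval I \<sigma> f = Tt"
proof (induction xs arbitrary: \<theta>)
  case Nil
  then show ?case by (simp add: Alls_def)
next
  case (Cons x xs)
  have "glb_t {eval I (\<theta>(x := d)) (Alls xs f) | d. True} = Tt"
    using Cons.prems(1) by (simp add: Alls_def)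
  moreover have "eval I (\<theta>(x := \<sigma> x)) (Alls xs f) \<in> {eval I (\<theta>(x := d)) (Alls xs f) | d. True}"
    by blast
  ultimately have "eval I (\<theta>(x := \<sigma> x)) (Alls xs f) = Tt"
    by (rule glb_t_eq_TtD)
  then show ?case by (rule Cons.IH) (use Cons.prems(2) in auto)
qed

lemma map_assign: "distinct xs \<Longrightarrow> length ds = length xs \<Longrightarrow> map (assign xs ds) xs = ds"
proof (induction xs arbitrary: ds)
  case (Cons x xs)
  then obtain d ds' where ds: "ds = d # ds'" by (cases ds) auto
  have "map (assign (x # xs) ds) xs = map (assign xs ds') xs"
    using Cons.prems unfolding ds assign_def by auto
  moreover have "assign (x # xs) ds x = d" unfolding ds assign_def by simp
  moreover have "map (assign xs ds') xs = ds'" using Cons ds by simp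
  ultimately show ?case using ds by simp
qed simp

lemma two_valued_above_Tt: "leq_p Tt a \<Longrightarrow> a \<in> {Tt, Ff} \<Longrightarrow> a = Tt"
  unfolding leq_p_def by auto

lemma model_inf_sentence_lit:
  assumes "is_model Sig ar {inf_sentence xs \<psi> pos P} M"
    and "fv \<psi> \<subseteq> set xs" and "distinct xs" and "length ds = length xs"
    and "eval M (assign xs ds) \<psi> = Tt"
  shows "M P ds = (if pos then Tt else Ff)"
proof -
  let ?\<phi> = "Imp \<psi> (lit pos P xs)"
  define \<sigma> where "\<sigma> v = (if v \<in> set xs then assign xs ds v else undefined v)" for v
  have "eval M undefined (Alls xs ?\<phi>) = Tt"
    using assms(1) unfolding is_model_def inf_sentence_def by simp
  then have "eval M \<sigma> ?\<phi> = Tt"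
    by (rule eval_Alls_TtD) (simp add: \<sigma>_def)
  moreover have "eval M \<sigma> ?\<phi> = eval M (assign xs ds) ?\<phi>"
    using assms(2) by (intro eval_cong) (auto simp: Imp_def lit_def \<sigma>_def split: if_splits)
  ultimately have "lub_t {Ff, eval M (assign xs ds) (lit pos P xs)} = Tt"
    using assms(5) by (simp add: Imp_def)
  then have "eval M (assign xs ds) (lit pos P xs) = Tt"
    by (rule lub_t_Ff_eq_TtD)
  then show ?thesis
    using map_assign[OF assms(3,4)] by (cases pos; cases "M P ds") (auto simp: lit_def)
qed

lemma inf_prop_inflationary: "struct_le_p Sig ar I (inf_prop xs \<psi> pos P I)"
  unfolding struct_le_p_def inf_prop_def by (auto simp: leq_p_refl lub_p_upper)

lemma inf_prop_below_model:
  fixes I M :: "('p, 'd) struct4"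
  assumes wf: "wf_fm Sig ar \<psi>" and fv: "fv \<psi> \<subseteq> set xs" and dist: "distinct xs"
    and M: "is_model Sig ar {inf_sentence xs \<psi> pos P} M" and IM: "struct_le_p Sig ar I M"
  shows "struct_le_p Sig ar (inf_prop xs \<psi> pos P I) M"
  unfolding struct_le_p_def
proof (intro ballI allI impI)
  fix Q and ds :: "'d list"
  assume Q: "Q \<in> Sig" and len: "length ds = ar Q"
  have IM_Q: "leq_p (I Q ds) (M Q ds)" using IM Q len unfolding struct_le_p_def by simp
  show "leq_p (inf_prop xs \<psi> pos P I Q ds) (M Q ds)"
  proof (cases "Q = P \<and> length ds = length xs \<and> leq_p Tt (eval I (assign xs ds) \<psi>)")
    case True
    have "leq_p Tt (eval M (assign xs ds) \<psi>)"
      using True leq_p_trans eval_mono_p[OF IM wf] by blast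
    moreover have "eval M (assign xs ds) \<psi> \<in> {Tt, Ff}"
      using M wf eval_two_valued unfolding is_model_def by blast
    ultimately have "eval M (assign xs ds) \<psi> = Tt" by (rule two_valued_above_Tt)
    then have "M P ds = (if pos then Tt else Ff)"
      using model_inf_sentence_lit[OF M fv dist] True by simp
    then show ?thesis
      using True IM_Q unfolding inf_prop_def
      by (cases pos; cases "I P ds") (auto simp: lub_p_eq leq_p_def)
  next
    case False
    then show ?thesis using IM_Q unfolding inf_prop_def by auto
  qed
qed

lemma inf_prop_mono:
  fixes I J :: "('p, 'd) struct4"
  assumes wf: "wf_fm Sig ar \<psi>" and IJ: "struct_le_p Sig ar I J"
  shows "struct_le_p Sig ar (inf_prop xs \<psi> pos P I) (inf_prop xs \<psi> pos P J)"
  unfolding struct_le_p_def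
proof (intro ballI allI impI)
  fix Q and ds :: "'d list"
  assume Q: "Q \<in> Sig" and len: "length ds = ar Q"
  have IJ_Q: "leq_p (I Q ds) (J Q ds)" using IJ Q len unfolding struct_le_p_def by simp
  have fires: "leq_p Tt (eval J (assign xs ds) \<psi>)" if "leq_p Tt (eval I (assign xs ds) \<psi>)"
    using that leq_p_trans eval_mono_p[OF IJ wf] by blast
  have "leq_p (I Q ds) (lub_p {if pos then Tt else Ff, J Q ds})"
    using IJ_Q leq_p_trans lub_p_upper by blast
  moreover have "leq_p (lub_p {if pos then Tt else Ff, I Q ds})
                       (lub_p {if pos then Tt else Ff, J Q ds})"
    using IJ_Q by (intro lub_p_mono egli_milner_pair leq_p_refl)
  ultimately show "leq_p (inf_prop xs \<psi> pos P I Q ds) (inf_prop xs \<psi> pos P J Q ds)"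
    using IJ_Q fires unfolding inf_prop_def by auto
qed

theorem proposition4p3:
  fixes Sig :: "'p set" and ar :: "'p \<Rightarrow> nat"
    and xs :: "'v list" and \<psi> :: "('p, 'v) fm" and pos :: bool and P :: 'p
  assumes "finite Sig"
    and "is_inf Sig ar xs \<psi> pos P"
  shows "is_propagator Sig ar {inf_sentence xs \<psi> pos P}
           (inf_prop xs \<psi> pos P :: ('p, 'd) struct4 \<Rightarrow> ('p, 'd) struct4)
       \<and> monotone_op Sig ar
           (inf_prop xs \<psi> pos P :: ('p, 'd) struct4 \<Rightarrow> ('p, 'd) struct4)"
proof -
  have "wf_fm Sig ar \<psi>" "fv \<psi> \<subseteq> set xs" "distinct xs"
    using assms(2) unfolding is_inf_def by simp_all
  then show ?thesis
    unfolding is_propagator_def monotone_op_def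
    by (simp add: inf_prop_inflationary inf_prop_below_model inf_prop_mono)
qed

end
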